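(* For every $m\ge2$, $\mathbf{E}_m\subseteq\mathbf{T}_m^1$.
   Context: All varieties are varieties of monoids (signature: associative binary operation and identity constant $1$); identities are pairs of words over a countably infinite set of variables, and variables may be substituted by $1$. $\mathbf{O}$ is the variety defined by $xyt_1xt_2y \approx yxt_1xt_2y$, $xt_1xyt_2y \approx xt_1yxt_2y$, $xt_1yt_2xy \approx xt_1yt_2yx$. For $m\ge1$, $\mathbf{E}_m$ is the subvariety of $\mathbf{O}$ defined additionally by $x^{m+1}\approx x^m$ and $x^mt\approx tx^m$. For $m\ge2$, a semigroup is $m$-testable if it satisfies every semigroup identity $\mathbf{u}\approx\mathbf{v}$ (between nonempty words) such that $\mathbf{u},\mathbf{v}$ have the same prefix of length $m-1$, the same suffix of length $m-1$, and the same set of factors of length $m$. $T_m$ is a finite semigroup generating the variety of all $m$-testable semigroups; $T_m$ satisfies an identity iff these three conditions hold for it. $T_m^1$ is $T_m$ with an external identity element adjoined, and $\mathbf{T}_m^1$ is the monoid variety generated by $T_m^1$. *)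

theory Defs
  imports Main
begin

(* Words over the countably infinite set of variables nat; a monoid identity is a pair of words. *)

definition word_eval :: "(nat \<Rightarrow> 'a::monoid_mult) \<Rightarrow> nat list \<Rightarrow> 'a" where
  "word_eval \<phi> w = prod_list (map \<phi> w)"

definition monoid_sat :: "'a::monoid_mult itself \<Rightarrow> nat list \<Rightarrow> nat list \<Rightarrow> bool" where
  "monoid_sat _ u v \<longleftrightarrow> (\<forall>\<phi> :: nat \<Rightarrow> 'a. word_eval \<phi> u = word_eval \<phi> v)"

(* Variables: x = 0, y = 1, t1 = 2, t2 = 3, t = 2 *)
definition in_O :: "'a::monoid_mult itself \<Rightarrow> bool" where
  "in_O T \<longleftrightarrow>
     monoid_sat T [0,1,2,0,3,1] [1,0,2,0,3,1] \<and>
     monoid_sat T [0,2,0,1,3,1] [0,2,1,0,3,1] \<and>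
     monoid_sat T [0,2,1,3,0,1] [0,2,1,3,1,0]"

definition in_E :: "nat \<Rightarrow> 'a::monoid_mult itself \<Rightarrow> bool" where
  "in_E m T \<longleftrightarrow> in_O T \<and>
     monoid_sat T (replicate (m+1) 0) (replicate m 0) \<and>
     monoid_sat T (replicate m 0 @ [2]) (2 # replicate m 0)"

definition factors :: "nat \<Rightarrow> 'v list \<Rightarrow> 'v list set" where
  "factors k w = {take k (drop i w) | i. i + k \<le> length w}"

definition suffix_of_len :: "nat \<Rightarrow> 'v list \<Rightarrow> 'v list" where
  "suffix_of_len k w = drop (length w - k) w"

(* Semigroup identity u = v (nonempty words) holding in T_m, i.e. in all m-testable semigroups.
   Prefix/suffix of length m-1 of a shorter word is the word itself. *)
definition testable_sat :: "nat \<Rightarrow> nat list \<Rightarrow> nat list \<Rightarrow> bool" where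
  "testable_sat m u v \<longleftrightarrow> u \<noteq> [] \<and> v \<noteq> [] \<and>
     take (m-1) u = take (m-1) v \<and>
     suffix_of_len (m-1) u = suffix_of_len (m-1) v \<and>
     factors m u = factors m v"

(* Monoid identity u = v holds in T_m^1: for every set X of variables sent to the adjoined 1
   (the others to T_m), the resulting words are both empty, or both nonempty and the
   semigroup identity holds in T_m. *)
definition T1_sat :: "nat \<Rightarrow> nat list \<Rightarrow> nat list \<Rightarrow> bool" where
  "T1_sat m u v \<longleftrightarrow>
     (\<forall>X :: nat set.
        let u' = filter (\<lambda>x. x \<notin> X) u; v' = filter (\<lambda>x. x \<notin> X) v in
        (u' = [] \<and> v' = []) \<or> testable_sat m u' v')"

end

theory Submission
  imports Defs "HOL-Library.Sublist" "HOL-Library.Multiset"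
begin

(* Restricting u and v to any set of letters preserves the hypothesis, and for the restricted
   words it says: they are equal if shorter than m, and they have the same factors of length
   at most m and the same prefixes and suffixes of length less than m.  Consequently u and v
   have the same set L of linear letters (letters occurring exactly once), in the same order.
   If for some non-linear y the restriction of u to {y} \<union> L contains y^m, then so does that
   of v; both words can then be rearranged to contain y^m, and since x^m is central and
   absorbs further occurrences of x, both sides equal y^m times the word with y deleted, so
   induction on the length applies.  Otherwise every maximal run of y in the restriction to
   {y} \<union> L is shorter than m and is therefore recovered from the short factors, prefixes and
   suffixes; hence the blocks of non-linear letters between consecutive linear letters have
   the same content in u and v.  The identities of O let two adjacent letters commute as soon
   as each of them occurs elsewhere in the word, so blocks with the same content have the same
   value. *)

lemma word_eval_simps [simp]:
  "word_eval \<phi> [] = 1"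
  "word_eval \<phi> (x # xs) = \<phi> x * word_eval \<phi> xs"
  "word_eval \<phi> (xs @ ys) = word_eval \<phi> xs * word_eval \<phi> ys"
  "word_eval \<phi> (replicate n x) = \<phi> x ^ n"
  by (simp_all add: word_eval_def)

lemma count_list_filter: "count_list (filter P xs) x = (if P x then count_list xs x else 0)"
  by (induction xs) auto

lemma not_in_prefix_if_count_le_1: "count_list (p @ t # w) t \<le> 1 \<Longrightarrow> t \<notin> set p"
  by (auto simp: count_list_0_iff[symmetric])

lemma filter_eq_appendE:
  assumes "filter P w = xs @ ys"
  obtains a b where "w = a @ b" "filter P a = xs" "filter P b = ys"
  using assms
proof (induction w arbitrary: xs thesis)
  case Nil
  then show ?case by simp
next
  case (Cons c w)
  show ?case
  proof (cases "P c \<and> xs \<noteq> []")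
    case True
    then obtain xs' where "xs = c # xs'" "filter P w = xs' @ ys"
      using Cons.prems(2) by (cases xs) auto
    then show ?thesis
      using Cons.IH[of xs'] Cons.prems(1) True by (metis append_Cons filter.simps(2))
  next
    case False
    then show ?thesis
    proof (cases "P c")
      case True
      with False show ?thesis
        using Cons.prems by (intro Cons.prems(1)[of "[]" "c # w"]) auto
    next
      case False
      then show ?thesis
        using Cons.IH[of xs] Cons.prems by (metis append_Cons filter.simps(2))
    qed
  qed
qed

lemma list_eq_if_single_letter:
  assumes "set xs \<subseteq> {y}" "set ys \<subseteq> {y}" "length xs = length ys"
  shows "xs = ys"
proof -
  have "xs = replicate (length xs) y" "ys = replicate (length ys) y"
    using assms(1,2) by (auto intro: replicate_length_same[symmetric])
  then show ?thesis
    using assms(3) by metis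
qed

lemma sublist_extend:
  assumes "sublist w A" "length w \<le> k" "k \<le> length A"
  obtains f where "length f = k" "sublist w f" "sublist f A"
proof -
  obtain p s where A: "A = p @ w @ s"
    using assms(1) by (auto simp: sublist_def)
  show thesis
  proof (cases "k \<le> length (w @ s)")
    case True
    have "prefix w (take k (w @ s))"
      using assms(2) by (simp add: take_append)
    moreover have "sublist (take k (w @ s)) A"
      using A sublist_order.order_trans[OF sublist_take, of "w @ s" A k] by auto
    ultimately show thesis
      using True by (intro that[of "take k (w @ s)"]) (simp_all add: prefix_imp_sublist)
  next
    case False
    have "suffix (w @ s) A"
      using A by (simp add: suffix_def)
    then have "suffix (w @ s) (drop (length A - k) A)"
      using False assms(3) by (intro suffix_length_suffix[OF _ suffix_drop]) auto
    then have "sublist w (drop (length A - k) A)"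
      using sublist_order.order_trans[OF sublist_append_rightI suffix_imp_sublist] by blast
    then show thesis
      using assms(3) by (intro that[of "drop (length A - k) A"]) auto
  qed
qed

lemma distinct_eqI:
  assumes "distinct A" "distinct B" "set A = set B" "take 1 A = take 1 B"
    and "\<And>a b. sublist [a, b] A \<Longrightarrow> sublist [a, b] B"
  shows "A = B"
  using assms
proof (induction A arbitrary: B)
  case Nil
  then show ?case by simp
next
  case (Cons a A)
  then obtain B' where B: "B = a # B'"
    by (cases B) auto
  have sublist_B': "sublist [c, d] B'" if "sublist [c, d] B" "c \<noteq> a" for c d
    using that B by (auto simp: sublist_Cons_right)
  show ?case
  proof (cases A)
    case Nil
    then show ?thesis
      using Cons.prems(2,3) B by (cases B') auto
  next
    case (Cons b A')
    have "sublist [a, b] B"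
      using Cons.prems(5) \<open>A = b # A'\<close> by (simp add: sublist_Cons_right)
    then have "take 1 B' = [b]"
      using B Cons.prems(2) by (auto simp: sublist_Cons_right prefix_def dest: set_mono_sublist)
    moreover have "sublist [c, d] B'" if "sublist [c, d] A" for c d
    proof (rule sublist_B')
      show "sublist [c, d] B"
        using that Cons.prems(5) by (simp add: sublist_Cons_right)
      show "c \<noteq> a"
        using that Cons.prems(1) set_mono_sublist[OF that] by auto
    qed
    moreover have "set A = set B'"
      using Cons.prems(1,2,3) B by auto
    ultimately have "A = B'"
      using Cons.IH Cons.prems(1,2) B \<open>A = b # A'\<close> by auto
    then show ?thesis
      using B by simp
  qed
qed

section \<open>Identities satisfied by T_m and T_m^1\<close>

lemma mem_factors_iff: "f \<in> factors k w \<longleftrightarrow> sublist f w \<and> length f = k"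
proof
  assume "f \<in> factors k w"
  then obtain i where i: "i + k \<le> length w" "f = take k (drop i w)"
    by (auto simp: factors_def)
  have "w = take i w @ f @ drop k (drop i w)"
    using i(2) by (simp only: append_take_drop_id)
  moreover have "length f = k"
    using i by simp
  ultimately show "sublist f w \<and> length f = k"
    by (metis sublist_appendI)
next
  assume "sublist f w \<and> length f = k"
  then obtain p s where "w = p @ f @ s" "length f = k"
    by (auto simp: sublist_def)
  then show "f \<in> factors k w"
    unfolding factors_def by (intro CollectI exI[of _ "length p"]) simp
qed

lemma testable_sat_sym: "testable_sat m A B \<Longrightarrow> testable_sat m B A"
  by (auto simp: testable_sat_def)

lemma testable_sat_short:
  assumes "testable_sat m A B" "length A < m"
  shows "A = B"
proof -
  have "factors m A = {}"
    using assms(2) by (fastforce simp: mem_factors_iff dest: sublist_length_le)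
  then have "factors m B = {}"
    using assms(1) by (simp add: testable_sat_def)
  then have "length B < m"
    using mem_factors_iff[of "take m B" m B] by (cases "m \<le> length B") auto
  moreover have "take (m - 1) A = take (m - 1) B"
    using assms(1) by (simp add: testable_sat_def)
  ultimately show ?thesis
    using assms(2) by simp
qed

lemma testable_sat_sublist:
  assumes "testable_sat m A B" "length w \<le> m" "sublist w A"
  shows "sublist w B"
proof (cases "m \<le> length A")
  case True
  then obtain f where "length f = m" "sublist w f" "sublist f A"
    using sublist_extend assms(2,3) by blast
  then have "f \<in> factors m A"
    by (simp add: mem_factors_iff)
  then have "f \<in> factors m B"
    using assms(1) by (simp add: testable_sat_def)
  then show ?thesis
    using \<open>sublist w f\<close> by (auto simp: mem_factors_iff intro: sublist_order.order_trans)
next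
  case False
  then show ?thesis
    using assms testable_sat_short by fastforce
qed

lemma testable_sat_prefix:
  assumes "testable_sat m A B" "length q < m" "prefix q A"
  shows "prefix q B"
proof -
  have "prefix q (take (m - 1) A)"
    using assms(2,3) by (intro prefix_length_prefix[OF _ take_is_prefix]) (auto dest: prefix_length_le)
  then show ?thesis
    using assms(1) by (metis testable_sat_def take_is_prefix prefix_order.trans)
qed

lemma testable_sat_suffix:
  assumes "testable_sat m A B" "length q < m" "suffix q A"
  shows "suffix q B"
proof -
  have "suffix q (suffix_of_len (m - 1) A)"
    unfolding suffix_of_len_def using assms(2,3)
    by (intro suffix_length_suffix[OF _ suffix_drop]) (auto dest: suffix_length_le)
  then show ?thesis
    using assms(1) by (metis testable_sat_def suffix_of_len_def suffix_drop suffix_order.trans)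
qed

lemma T1_sat_sym: "T1_sat m u v \<Longrightarrow> T1_sat m v u"
  by (auto simp: T1_sat_def Let_def dest: testable_sat_sym)

lemma T1_sat_filter:
  assumes "T1_sat m u v"
  shows "T1_sat m (filter P u) (filter P v)"
  unfolding T1_sat_def
proof
  fix X :: "nat set"
  have "\<And>w. filter (\<lambda>x. x \<notin> X) (filter P w) = filter (\<lambda>x. x \<notin> X \<union> {z. \<not> P z}) w"
    by (auto simp: filter_filter conj_commute intro: filter_cong)
  then show "let u' = filter (\<lambda>x. x \<notin> X) (filter P u); v' = filter (\<lambda>x. x \<notin> X) (filter P v)
             in u' = [] \<and> v' = [] \<or> testable_sat m u' v'"
    using assms unfolding T1_sat_def by presburger
qed

lemma T1_sat_cases: "T1_sat m u v \<Longrightarrow> u = v \<or> testable_sat m u v"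
  unfolding T1_sat_def by (erule allE[of _ "{}"]) auto

lemma T1_sat_short: "T1_sat m u v \<Longrightarrow> length u < m \<Longrightarrow> u = v"
  using T1_sat_cases testable_sat_short by blast

lemma T1_sat_sublist: "T1_sat m u v \<Longrightarrow> length w \<le> m \<Longrightarrow> sublist w u \<Longrightarrow> sublist w v"
  using T1_sat_cases testable_sat_sublist by blast

lemma T1_sat_prefix: "T1_sat m u v \<Longrightarrow> length q < m \<Longrightarrow> prefix q u \<Longrightarrow> prefix q v"
  using T1_sat_cases testable_sat_prefix by blast

lemma T1_sat_suffix: "T1_sat m u v \<Longrightarrow> length q < m \<Longrightarrow> suffix q u \<Longrightarrow> suffix q v"
  using T1_sat_cases testable_sat_suffix by blast

definition linear_letters :: "'v list \<Rightarrow> 'v set" where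
  "linear_letters w = {x. count_list w x = 1}"

lemma T1_sat_linear_letters:
  assumes "2 \<le> m" "T1_sat m u v"
  shows "linear_letters u = linear_letters v"
proof -
  have "count_list v x = 1" if "T1_sat m u v" "count_list u x = 1" for u v x
  proof -
    have "T1_sat m (filter ((=) x) u) (filter ((=) x) v)"
      using that(1) by (rule T1_sat_filter)
    then show "count_list v x = 1"
      using that(2) assms(1) T1_sat_short by (fastforce simp: count_list_eq_length_filter)
  qed
  then show ?thesis
    using assms(2) T1_sat_sym unfolding linear_letters_def by blast
qed

lemma T1_sat_filter_linear:
  assumes "2 \<le> m" "T1_sat m u v" "L \<subseteq> linear_letters u" "L \<subseteq> linear_letters v"
  shows "filter (\<lambda>z. z \<in> L) u = filter (\<lambda>z. z \<in> L) v" (is "?A = ?B")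
proof (rule distinct_eqI)
  have T: "T1_sat m ?A ?B"
    using assms(2) by (rule T1_sat_filter)
  have count: "count_list ?A x = (if x \<in> L then 1 else 0)" "count_list ?B x = (if x \<in> L then 1 else 0)" for x
    using assms(3,4) by (auto simp: linear_letters_def count_list_filter)
  have "x \<in> set ?A \<longleftrightarrow> x \<in> L" "x \<in> set ?B \<longleftrightarrow> x \<in> L" for x
    using count[of x] count_list_0_iff[of ?A x] count_list_0_iff[of ?B x] by (cases "x \<in> L"; simp)+
  then have set_eq: "set ?A = L" "set ?B = L"
    by blast+
  have distinct_if: "distinct xs" if "\<And>a. count_list xs a = (if a \<in> set xs then 1 else 0)"
    for xs :: "nat list"
    using that by (simp add: distinct_count_atmost_1 count_mset)
  show "distinct ?A" "distinct ?B"
    by (rule distinct_if, simp only: count set_eq)+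
  show "set ?A = set ?B"
    using set_eq by simp
  have "prefix (take 1 ?A) ?B"
    using assms(1) by (intro T1_sat_prefix[OF T]) (auto simp: take_is_prefix)
  then show "take 1 ?A = take 1 ?B"
    using \<open>set ?A = set ?B\<close> by (cases ?A; cases ?B) (auto simp: prefix_def)
  show "sublist [a, b] ?B" if "sublist [a, b] ?A" for a b
    using assms(1) that by (intro T1_sat_sublist[OF T]) auto
qed

section \<open>Runs of non-linear letters between linear letters\<close>

abbreviation leading_run :: "'v set \<Rightarrow> 'v list \<Rightarrow> 'v list" where
  "leading_run L w \<equiv> takeWhile (\<lambda>z. z \<notin> L) w"

definition run_after :: "'v set \<Rightarrow> 'v \<Rightarrow> 'v list \<Rightarrow> 'v list" where
  "run_after L t w = leading_run L (tl (dropWhile (\<lambda>z. z \<noteq> t) w))"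

lemma run_after_append: "t \<notin> set p \<Longrightarrow> run_after L t (p @ w) = run_after L t w"
  unfolding run_after_def by (subst dropWhile_append2) auto

lemma run_after_append_Cons: "t \<notin> set p \<Longrightarrow> run_after L t (p @ t # w) = leading_run L w"
  using run_after_append[of t p L "t # w"] by (simp add: run_after_def)

lemma run_after_not_in: "t \<notin> set w \<Longrightarrow> run_after L t w = []"
  using run_after_append[of t w L "[]"] by (simp add: run_after_def)

lemma sublist_run_after: "sublist (run_after L t w) w"
  unfolding run_after_def
  by (meson sublist_dropWhile sublist_order.order_trans sublist_takeWhile sublist_tl)

lemma set_run_after: "set (run_after L t w) \<subseteq> set w - L"
  using set_mono_sublist[OF sublist_run_after[of L t w]] unfolding run_after_def
  by (auto dest: set_takeWhileD)

lemma filter_leading_run: "(\<And>z. z \<in> L \<Longrightarrow> P z) \<Longrightarrow> filter P (leading_run L w) = leading_run L (filter P w)"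
  by (induction w) auto

lemma filter_run_after:
  assumes "P t" "\<And>z. z \<in> L \<Longrightarrow> P z"
  shows "filter P (run_after L t w) = run_after L t (filter P w)"
proof -
  have "filter P (tl (dropWhile (\<lambda>z. z \<noteq> t) w)) = tl (dropWhile (\<lambda>z. z \<noteq> t) (filter P w))"
    using assms(1) by (induction w) auto
  then show ?thesis
    unfolding run_after_def using assms(2) by (simp add: filter_leading_run)
qed

lemma runs_of_append_Cons:
  assumes "u = b @ t # u1" "\<forall>z\<in>set b. z \<notin> L" "t \<in> L" "count_list u t \<le> 1"
  shows "leading_run L u = b"
    and "run_after L t u = leading_run L u1"
    and "s \<in> L \<Longrightarrow> run_after L s u1 = (if s = t then [] else run_after L s u)"
proof -
  have "t \<notin> set b" "t \<notin> set u1"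
    using assms by (auto simp: count_list_0_iff[symmetric])
  then show "leading_run L u = b" "run_after L t u = leading_run L u1"
    using assms(1-3) by (auto simp: takeWhile_append run_after_append_Cons)
  show "run_after L s u1 = (if s = t then [] else run_after L s u)" if "s \<in> L"
    using that assms(1,2) \<open>t \<notin> set u1\<close> run_after_append[of s "b @ [t]" L u1]
    by (auto simp: run_after_not_in)
qed

lemma length_less_if_no_power:
  assumes "set R \<subseteq> {y}" "sublist R w" "\<not> sublist (replicate m y) w"
  shows "length R < m"
proof (rule ccontr)
  assume "\<not> length R < m"
  then have "take m R = replicate m y"
    using assms(1) set_take_subset[of m R] by (intro list_eq_if_single_letter[of _ y]) auto
  then have "sublist (replicate m y) R"
    by (metis sublist_take)
  then show False
    using assms(2,3) sublist_order.order_trans by blast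
qed

lemma leading_run_length_le:
  assumes "T1_sat m A B" "set B \<subseteq> insert y L" "\<not> sublist (replicate m y) B"
  shows "length (leading_run L B) \<le> length (leading_run L A)"
proof (rule ccontr)
  let ?R = "leading_run L A"
  assume less: "\<not> length (leading_run L B) \<le> length ?R"
  have "set (leading_run L B) \<subseteq> {y}"
    using assms(2) by (auto dest: set_takeWhileD)
  then have "length (leading_run L B) < m"
    using assms(3) by (intro length_less_if_no_power) auto
  show False
  proof (cases "dropWhile (\<lambda>z. z \<notin> L) A")
    case Nil
    then have "?R = A"
      by (simp add: takeWhile_eq_all_conv)
    then have "length A < m"
      using less \<open>length (leading_run L B) < m\<close> by (metis order.strict_trans not_le)
    then show False
      using less T1_sat_short[OF assms(1)] by simp
  next
    case (Cons s q)
    then have "s \<in> L" "A = ?R @ s # q"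
      using hd_dropWhile[of "\<lambda>z. z \<notin> L" A] takeWhile_dropWhile_id[of "\<lambda>z. z \<notin> L" A] by auto
    then have "prefix (?R @ [s]) B"
      using less \<open>length (leading_run L B) < m\<close>
      by (intro T1_sat_prefix[OF assms(1)]) (auto simp: prefix_def)
    then have "leading_run L B = ?R"
      using \<open>s \<in> L\<close> by (auto simp: prefix_def takeWhile_append dest: set_takeWhileD)
    then show False
      using less by simp
  qed
qed

lemma run_after_length_le:
  assumes "T1_sat m A B" "set B \<subseteq> insert y L" "\<not> sublist (replicate m y) B"
    and "t \<in> set A" "count_list B t \<le> 1"
  shows "length (run_after L t B) \<le> length (run_after L t A)"
proof (rule ccontr)
  obtain p q where A: "A = p @ t # q" "t \<notin> set p"
    using assms(4) by (meson split_list_first)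
  let ?R = "leading_run L q"
  have R: "run_after L t A = ?R"
    using A by (simp add: run_after_append_Cons)
  assume less: "\<not> length (run_after L t B) \<le> length (run_after L t A)"
  have "length (run_after L t B) < m"
    using assms(2,3) set_run_after[of L t B] sublist_run_after[of L t B]
    by (intro length_less_if_no_power) auto
  have run_after_B: "run_after L t B = ?R" if "B = p' @ t # ?R @ w" "\<forall>z\<in>set (take 1 w). z \<in> L" for p' w
  proof -
    have "t \<notin> set p'"
      using assms(5) that(1) not_in_prefix_if_count_le_1 by metis
    then show ?thesis
      using that by (cases w) (auto simp: run_after_append_Cons takeWhile_append dest: set_takeWhileD)
  qed
  show False
  proof (cases "dropWhile (\<lambda>z. z \<notin> L) q")
    case Nil
    have "suffix (t # ?R) A"
    proof -
      have "?R = q"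
        using Nil by (simp add: takeWhile_eq_all_conv)
      then show ?thesis
        unfolding A suffix_def by (intro exI[of _ p]) (simp only:)
    qed
    then have "suffix (t # ?R) B"
      using less R \<open>length (run_after L t B) < m\<close> by (intro T1_sat_suffix[OF assms(1)]) auto
    then show False
      using run_after_B[of _ "[]"] less R by (auto simp: suffix_def)
  next
    case (Cons s q')
    then have "s \<in> L" "q = ?R @ s # q'"
      using hd_dropWhile[of "\<lambda>z. z \<notin> L" q] takeWhile_dropWhile_id[of "\<lambda>z. z \<notin> L" q] by auto
    then have "sublist (t # ?R @ [s]) A"
      using A by (auto simp: sublist_def intro: exI[of _ p] exI[of _ q'])
    then have "sublist (t # ?R @ [s]) B"
      using less R \<open>length (run_after L t B) < m\<close> by (intro T1_sat_sublist[OF assms(1)]) auto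
    then show False
      using run_after_B[of _ "s # _"] \<open>s \<in> L\<close> less R by (auto simp: sublist_def)
  qed
qed

lemma leading_run_eq:
  assumes "T1_sat m A B" "set A \<subseteq> insert y L" "set B \<subseteq> insert y L"
    and "\<not> sublist (replicate m y) A" "\<not> sublist (replicate m y) B"
  shows "leading_run L A = leading_run L B"
proof (rule list_eq_if_single_letter)
  show "set (leading_run L A) \<subseteq> {y}" "set (leading_run L B) \<subseteq> {y}"
    using assms(2,3) by (auto dest: set_takeWhileD)
  show "length (leading_run L A) = length (leading_run L B)"
    using leading_run_length_le[OF assms(1,3,5)] leading_run_length_le[OF T1_sat_sym[OF assms(1)] assms(2,4)]
    by linarith
qed

lemma run_after_eq:
  assumes "T1_sat m A B" "set A \<subseteq> insert y L" "set B \<subseteq> insert y L"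
    and "\<not> sublist (replicate m y) A" "\<not> sublist (replicate m y) B"
    and "t \<in> set A" "t \<in> set B" "count_list A t \<le> 1" "count_list B t \<le> 1"
  shows "run_after L t A = run_after L t B"
proof (rule list_eq_if_single_letter)
  show "set (run_after L t A) \<subseteq> {y}" "set (run_after L t B) \<subseteq> {y}"
    using assms(2,3) set_run_after[of L t A] set_run_after[of L t B] by auto
  show "length (run_after L t A) = length (run_after L t B)"
    using run_after_length_le[OF assms(1,3,5,6,9)] run_after_length_le[OF T1_sat_sym[OF assms(1)] assms(2,4,7,8)]
    by linarith
qed

lemma count_leading_run_restrict:
  "count_list (leading_run L (filter (\<lambda>z. z = x \<or> z \<in> L) w)) x = count_list (leading_run L w) x"
  by (simp add: filter_leading_run[symmetric] count_list_filter)

lemma count_run_after_restrict: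
  "t \<in> L \<Longrightarrow> count_list (run_after L t (filter (\<lambda>z. z = x \<or> z \<in> L) w)) x = count_list (run_after L t w) x"
  by (simp add: filter_run_after[symmetric] count_list_filter)

lemma T1_sat_leading_run_mset:
  assumes "T1_sat m u v"
    and no_power: "\<And>y. y \<notin> L \<Longrightarrow> \<not> sublist (replicate m y) (filter (\<lambda>z. z = y \<or> z \<in> L) u)"
  shows "mset (leading_run L u) = mset (leading_run L v)"
proof (rule multiset_eqI)
  fix x
  show "count (mset (leading_run L u)) x = count (mset (leading_run L v)) x"
  proof (cases "x \<in> L")
    case True
    then have "x \<notin> set (leading_run L u)" "x \<notin> set (leading_run L v)"
      by (auto dest: set_takeWhileD)
    then show ?thesis
      by (metis count_mset_0_iff)
  next
    case False
    let ?P = "\<lambda>z. z = x \<or> z \<in> L"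
    have T: "T1_sat m (filter ?P u) (filter ?P v)"
      using assms(1) by (rule T1_sat_filter)
    have no_u: "\<not> sublist (replicate m x) (filter ?P u)"
      using no_power False .
    then have "\<not> sublist (replicate m x) (filter ?P v)"
      using T1_sat_sublist[OF T1_sat_sym[OF T]] by auto
    then have "leading_run L (filter ?P u) = leading_run L (filter ?P v)"
      using leading_run_eq[OF T _ _ no_u] by auto
    then show ?thesis
      using count_leading_run_restrict[of L x u] count_leading_run_restrict[of L x v]
      by (simp add: count_mset)
  qed
qed

lemma T1_sat_run_after_mset:
  assumes "T1_sat m u v" "t \<in> L" "L \<subseteq> linear_letters u" "L \<subseteq> linear_letters v"
    and no_power: "\<And>y. y \<notin> L \<Longrightarrow> \<not> sublist (replicate m y) (filter (\<lambda>z. z = y \<or> z \<in> L) u)"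
  shows "mset (run_after L t u) = mset (run_after L t v)"
proof (rule multiset_eqI)
  fix x
  show "count (mset (run_after L t u)) x = count (mset (run_after L t v)) x"
  proof (cases "x \<in> L")
    case True
    then have "x \<notin> set (run_after L t u)" "x \<notin> set (run_after L t v)"
      using set_run_after by fastforce+
    then show ?thesis
      by (metis count_mset_0_iff)
  next
    case False
    let ?P = "\<lambda>z. z = x \<or> z \<in> L"
    have T: "T1_sat m (filter ?P u) (filter ?P v)"
      using assms(1) by (rule T1_sat_filter)
    have no_u: "\<not> sublist (replicate m x) (filter ?P u)"
      using no_power False .
    then have no_v: "\<not> sublist (replicate m x) (filter ?P v)"
      using T1_sat_sublist[OF T1_sat_sym[OF T]] by auto
    have count: "count_list (filter ?P u) t = 1" "count_list (filter ?P v) t = 1"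
      using assms(2-4) by (auto simp: linear_letters_def count_list_filter)
    then have "t \<in> set (filter ?P u)" "t \<in> set (filter ?P v)"
      using count_list_0_iff by (metis zero_neq_one)+
    then have "run_after L t (filter ?P u) = run_after L t (filter ?P v)"
      using count by (intro run_after_eq[OF T _ _ no_u no_v]) auto
    then show ?thesis
      using count_run_after_restrict[OF assms(2), of x u] count_run_after_restrict[OF assms(2), of x v]
      by (simp add: count_mset)
  qed
qed

section \<open>Monoids in E_m\<close>

locale E_monoid =
  fixes m :: nat and T :: "'a::monoid_mult itself"
  assumes in_E: "in_E m T"
begin

lemma O_identities:
  fixes a b c d s :: 'a
  shows swap_recurring_after: "a * (b * (c * (a * (d * (b * s))))) = b * (a * (c * (a * (d * (b * s)))))"
    and swap_between: "a * (c * (a * (b * (d * (b * s))))) = a * (c * (b * (a * (d * (b * s)))))"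
    and swap_recurring_before: "a * (c * (b * (d * (a * (b * s))))) = a * (c * (b * (d * (b * (a * s)))))"
proof -
  have eval: "word_eval ((!) [a, b, c, d]) u * s = word_eval ((!) [a, b, c, d]) v * s"
    if "monoid_sat T u v" for u v
    using that by (simp add: monoid_sat_def)
  show "a * (b * (c * (a * (d * (b * s))))) = b * (a * (c * (a * (d * (b * s)))))"
    using in_E eval[of "[0,1,2,0,3,1]" "[1,0,2,0,3,1]"] by (simp add: in_E_def in_O_def mult.assoc)
  show "a * (c * (a * (b * (d * (b * s))))) = a * (c * (b * (a * (d * (b * s)))))"
    using in_E eval[of "[0,2,0,1,3,1]" "[0,2,1,0,3,1]"] by (simp add: in_E_def in_O_def mult.assoc)
  show "a * (c * (b * (d * (a * (b * s))))) = a * (c * (b * (d * (b * (a * s)))))"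
    using in_E eval[of "[0,2,1,3,0,1]" "[0,2,1,3,1,0]"] by (simp add: in_E_def in_O_def mult.assoc)
qed

lemma power_absorbs: "(a :: 'a) ^ m * a = a ^ m"
  using in_E by (auto simp: in_E_def monoid_sat_def power_commutes dest: spec[of _ "\<lambda>_. a"])

lemma power_central: "(a :: 'a) ^ m * c = c * a ^ m"
  using in_E by (auto simp: in_E_def monoid_sat_def dest: spec[of _ "\<lambda>i. if i = 0 then a else c"])

lemma eval_swap_recurring_before:
  fixes \<phi> :: "nat \<Rightarrow> 'a"
  assumes "x \<in> set p" "y \<in> set p \<union> set s" "x \<noteq> y"
  shows "word_eval \<phi> (p @ x # y # s) = word_eval \<phi> (p @ y # x # s)"
proof -
  let ?e = "word_eval \<phi>"
  obtain p1 p2 where p: "p = p1 @ x # p2"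
    using assms(1) by (meson split_list)
  consider (after) s1 s2 where "s = s1 @ y # s2"
    | (first) p3 p4 where "p1 = p3 @ y # p4" | (second) p3 p4 where "p2 = p3 @ y # p4"
    using assms(2,3) p by (auto dest: split_list)
  then show ?thesis
  proof cases
    case after
    then show ?thesis
      using p swap_between[of "\<phi> x" "?e p2" "\<phi> y" "?e s1" "?e s2"] by (simp add: mult.assoc)
  next
    case first
    then show ?thesis
      using p swap_recurring_before[of "\<phi> y" "?e p4" "\<phi> x" "?e p2" "?e s"] by (simp add: mult.assoc)
  next
    case second
    then show ?thesis
      using p swap_recurring_before[of "\<phi> x" "?e p3" "\<phi> y" "?e p4" "?e s"] by (simp add: mult.assoc)
  qed
qed

lemma eval_swap_recurring_after:
  fixes \<phi> :: "nat \<Rightarrow> 'a"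
  assumes "x \<in> set s" "y \<in> set s" "x \<noteq> y"
  shows "word_eval \<phi> (p @ x # y # s) = word_eval \<phi> (p @ y # x # s)"
proof -
  let ?e = "word_eval \<phi>"
  obtain s1 s2 where s: "s = s1 @ x # s2"
    using assms(1) by (meson split_list)
  consider (first) s3 s4 where "s1 = s3 @ y # s4" | (second) s3 s4 where "s2 = s3 @ y # s4"
    using assms(2,3) s by (auto dest: split_list)
  then show ?thesis
  proof cases
    case first
    then show ?thesis
      using s swap_recurring_after[of "\<phi> y" "\<phi> x" "?e s3" "?e s4" "?e s2"] by (simp add: mult.assoc)
  next
    case second
    then show ?thesis
      using s swap_recurring_after[of "\<phi> x" "\<phi> y" "?e s1" "?e s3" "?e s4"] by (simp add: mult.assoc)
  qed
qed

lemma eval_swap: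
  fixes \<phi> :: "nat \<Rightarrow> 'a"
  assumes "2 \<le> count_list (p @ x # y # s) x" "2 \<le> count_list (p @ x # y # s) y"
  shows "word_eval \<phi> (p @ x # y # s) = word_eval \<phi> (p @ y # x # s)"
proof (cases "x = y")
  case True
  then show ?thesis by simp
next
  case False
  have "z \<in> set p \<union> set s" if "z = x \<or> z = y" for z
    using assms that False by (cases "z \<in> set p"; cases "z \<in> set s") auto
  then consider "x \<in> set p" "y \<in> set p \<union> set s" | "y \<in> set p" "x \<in> set p \<union> set s"
    | "x \<in> set s" "y \<in> set s"
    by auto
  then show ?thesis
    using eval_swap_recurring_before[of x p y s \<phi>] eval_swap_recurring_before[of y p x s \<phi>]
      eval_swap_recurring_after[of x s y \<phi> p] False
    by cases auto
qed

lemma eval_move_left: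
  fixes \<phi> :: "nat \<Rightarrow> 'a"
  assumes "\<forall>z\<in>set (y # b). 2 \<le> count_list (p @ b @ y # s) z"
  shows "word_eval \<phi> (p @ b @ y # s) = word_eval \<phi> (p @ y # b @ s)"
  using assms
proof (induction b arbitrary: p)
  case Nil
  then show ?case by simp
next
  case (Cons c b)
  have "word_eval \<phi> (p @ (c # b) @ y # s) = word_eval \<phi> ((p @ [c]) @ y # b @ s)"
    using Cons.IH[of "p @ [c]"] Cons.prems by simp
  also have "\<dots> = word_eval \<phi> (p @ y # c # b @ s)"
  proof -
    have "count_list (p @ c # y # b @ s) = count_list (p @ (c # b) @ y # s)"
      by (simp add: fun_eq_iff)
    then show ?thesis
      using eval_swap[of p c y "b @ s" \<phi>] Cons.prems by simp
  qed
  finally show ?case by simp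
qed

lemma eval_perm:
  fixes \<phi> :: "nat \<Rightarrow> 'a"
  assumes "mset b = mset b'" "\<forall>z\<in>set b. 2 \<le> count_list (p @ b @ s) z"
  shows "word_eval \<phi> (p @ b @ s) = word_eval \<phi> (p @ b' @ s)"
  using assms
proof (induction b' arbitrary: p b)
  case Nil
  then show ?case by simp
next
  case (Cons y b')
  have "y \<in> set b"
    using mset_eq_setD[OF Cons.prems(1)] by simp
  then obtain b1 b2 where b: "b = b1 @ y # b2"
    by (meson split_list)
  have count: "count_list (p @ b1 @ y # b2 @ s) = count_list (p @ b @ s)"
    "count_list ((p @ [y]) @ (b1 @ b2) @ s) = count_list (p @ b @ s)"
    using b by (simp_all add: fun_eq_iff)
  have "word_eval \<phi> (p @ b @ s) = word_eval \<phi> ((p @ [y]) @ (b1 @ b2) @ s)"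
    using eval_move_left[of y b1 p "b2 @ s" \<phi>] Cons.prems(2) b unfolding count(1) by simp
  also have "\<dots> = word_eval \<phi> ((p @ [y]) @ b' @ s)"
  proof (rule Cons.IH)
    show "mset (b1 @ b2) = mset b'"
      using Cons.prems(1) b by simp
    show "\<forall>z\<in>set (b1 @ b2). 2 \<le> count_list ((p @ [y]) @ (b1 @ b2) @ s) z"
      using Cons.prems(2) b unfolding count(2) by simp
  qed
  finally show ?case by simp
qed

lemma power_absorbs_letter:
  fixes \<phi> :: "nat \<Rightarrow> 'a"
  shows "\<phi> y ^ m * word_eval \<phi> w = \<phi> y ^ m * word_eval \<phi> (filter (\<lambda>z. z \<noteq> y) w)"
proof (induction w)
  case Nil
  then show ?case by simp
next
  case (Cons z w)
  show ?case
  proof (cases "z = y")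
    case True
    then show ?thesis
      using Cons power_absorbs[of "\<phi> y"] by (simp add: mult.assoc[symmetric])
  next
    case False
    have "\<phi> y ^ m * (\<phi> z * c) = \<phi> z * (\<phi> y ^ m * c)" for c
      using power_central[of "\<phi> y" "\<phi> z"] by (simp add: mult.assoc[symmetric])
    then show ?thesis
      using Cons False by simp
  qed
qed

lemma eval_replicate_power:
  fixes \<phi> :: "nat \<Rightarrow> 'a"
  shows "word_eval \<phi> (p @ replicate m y @ r) = \<phi> y ^ m * word_eval \<phi> (filter (\<lambda>z. z \<noteq> y) (p @ r))"
proof -
  have "word_eval \<phi> (p @ replicate m y @ r) = \<phi> y ^ m * word_eval \<phi> (p @ r)"
    using power_central[of "\<phi> y" "word_eval \<phi> p"] by (simp add: mult.assoc[symmetric])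
  also have "\<dots> = \<phi> y ^ m * word_eval \<phi> (filter (\<lambda>z. z \<noteq> y) (p @ r))"
    by (rule power_absorbs_letter)
  finally show ?thesis .
qed

lemma eval_power_factor:
  fixes \<phi> :: "nat \<Rightarrow> 'a"
  assumes "sublist (replicate m y) (filter (\<lambda>z. z = y \<or> z \<in> linear_letters w) w)"
    and "y \<notin> linear_letters w"
  shows "word_eval \<phi> w = \<phi> y ^ m * word_eval \<phi> (filter (\<lambda>z. z \<noteq> y) w)"
proof -
  let ?P = "\<lambda>z. z = y \<or> z \<in> linear_letters w"
  obtain p' s' where "filter ?P w = p' @ replicate m y @ s'"
    using assms(1) by (auto simp: sublist_def)
  then obtain p r where w: "w = p @ r" and "filter ?P r = replicate m y @ s'"
    using filter_eq_appendE by blast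
  then obtain b s where r: "r = b @ s" and b: "filter ?P b = replicate m y"
    using filter_eq_appendE by blast
  have nonlinear: "2 \<le> count_list w z" if "z \<in> set b" for z
  proof -
    have "z \<notin> linear_letters w"
    proof
      assume "z \<in> linear_letters w"
      then have "z \<in> set (filter ?P b)"
        using that by simp
      then show False
        using b assms(2) \<open>z \<in> linear_letters w\<close> by simp
    qed
    moreover have "count_list w z \<noteq> 0"
      using that w r by (simp add: count_list_0_iff)
    ultimately show ?thesis
      by (simp add: linear_letters_def)
  qed
  have "filter (\<lambda>z. z = y) b = filter (\<lambda>z. z = y) (filter ?P b)"
    by (induction b) auto
  then have "mset (filter (\<lambda>z. z = y) b) = replicate_mset m y"
    using b by simp
  have "mset b = filter_mset (\<lambda>z. z = y) (mset b) + filter_mset (\<lambda>z. z \<noteq> y) (mset b)"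
    by (rule multiset_partition)
  also have "\<dots> = mset (replicate m y @ filter (\<lambda>z. z \<noteq> y) b)"
    using \<open>mset (filter (\<lambda>z. z = y) b) = replicate_mset m y\<close> by simp
  finally have mset_b: "mset b = mset (replicate m y @ filter (\<lambda>z. z \<noteq> y) b)" .
  have "word_eval \<phi> w = word_eval \<phi> (p @ replicate m y @ (filter (\<lambda>z. z \<noteq> y) b @ s))"
    using eval_perm[OF mset_b, of p s \<phi>] nonlinear w r by simp
  also have "\<dots> = \<phi> y ^ m * word_eval \<phi> (filter (\<lambda>z. z \<noteq> y) w)"
    using eval_replicate_power[of \<phi> p y "filter (\<lambda>z. z \<noteq> y) b @ s"] w r by simp
  finally show ?thesis .
qed

lemma eval_eq_by_blocks:
  fixes \<phi> :: "nat \<Rightarrow> 'a"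
  assumes "filter (\<lambda>z. z \<in> L) u = filter (\<lambda>z. z \<in> L) v"
    and "\<forall>t\<in>L. count_list u t \<le> 1" "\<forall>t\<in>L. count_list v t \<le> 1"
    and "mset (leading_run L u) = mset (leading_run L v)"
    and "\<forall>t\<in>L. mset (run_after L t u) = mset (run_after L t v)"
    and "\<forall>z\<in>set u - L. 2 \<le> count_list (p @ u) z"
  shows "word_eval \<phi> (p @ u) = word_eval \<phi> (p @ v)"
  using assms
proof (induction "filter (\<lambda>z. z \<in> L) u" arbitrary: p u v)
  case Nil
  then have no_L: "\<forall>z\<in>set u. z \<notin> L" "\<forall>z\<in>set v. z \<notin> L"
    by (metis filter_empty_conv)+
  then have "mset u = mset v"
    using Nil.prems(4) by (metis takeWhile_eq_all_conv)
  moreover have "\<forall>z\<in>set u. 2 \<le> count_list (p @ u @ []) z"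
    using Nil.prems(6) no_L by auto
  ultimately show ?case
    using eval_perm[of u v p "[]" \<phi>] by simp
next
  case (Cons t ts)
  obtain b u1 where u: "u = b @ t # u1" "\<forall>z\<in>set b. z \<notin> L" "t \<in> L" "ts = filter (\<lambda>z. z \<in> L) u1"
    using filter_eq_ConsD[OF Cons.hyps(2)[symmetric]] by blast
  obtain b' v1 where v: "v = b' @ t # v1" "\<forall>z\<in>set b'. z \<notin> L" "ts = filter (\<lambda>z. z \<in> L) v1"
    using filter_eq_ConsD[OF Cons.hyps(2)[symmetric, unfolded Cons.prems(1)]] by blast
  have "count_list u t \<le> 1" "count_list v t \<le> 1"
    using Cons.prems(2,3) u(3) by auto
  note runs_u = runs_of_append_Cons[OF u(1-3) this(1)] and runs_v = runs_of_append_Cons[OF v(1,2) u(3) this(2)]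
  have mset_b: "mset b = mset b'"
    using Cons.prems(4) runs_u(1) runs_v(1) by simp
  have "word_eval \<phi> (p @ u) = word_eval \<phi> ((p @ b' @ [t]) @ u1)"
    using eval_perm[OF mset_b, of p "t # u1" \<phi>] Cons.prems(6) u(1,2) by auto
  also have "\<dots> = word_eval \<phi> ((p @ b' @ [t]) @ v1)"
  proof (rule Cons.hyps(1))
    show "ts = filter (\<lambda>z. z \<in> L) u1" "filter (\<lambda>z. z \<in> L) u1 = filter (\<lambda>z. z \<in> L) v1"
      using u(4) v(3) by simp_all
    show "\<forall>s\<in>L. count_list u1 s \<le> 1"
      using Cons.prems(2) u(1) by (auto split: if_splits)
    show "\<forall>s\<in>L. count_list v1 s \<le> 1"
      using Cons.prems(3) v(1) by (auto split: if_splits)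
    show "mset (leading_run L u1) = mset (leading_run L v1)"
      using Cons.prems(5) runs_u(2) runs_v(2) u(3) by metis
    show "\<forall>s\<in>L. mset (run_after L s u1) = mset (run_after L s v1)"
      using Cons.prems(5) runs_u(3) runs_v(3) by simp
    show "\<forall>z\<in>set u1 - L. 2 \<le> count_list ((p @ b' @ [t]) @ u1) z"
      using Cons.prems(6) u(1) mset_b by (auto simp flip: count_mset)
  qed
  also have "\<dots> = word_eval \<phi> (p @ v)"
    using v(1) by simp
  finally show ?case .
qed

lemma eval_eq_if_no_power_factor:
  fixes \<phi> :: "nat \<Rightarrow> 'a"
  assumes "2 \<le> m" "T1_sat m u v"
    and "\<And>y. y \<notin> linear_letters u \<Longrightarrow>
      \<not> sublist (replicate m y) (filter (\<lambda>z. z = y \<or> z \<in> linear_letters u) u)"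
  shows "word_eval \<phi> u = word_eval \<phi> v"
proof -
  let ?L = "linear_letters u"
  have L_v: "?L = linear_letters v"
    using assms(1,2) by (rule T1_sat_linear_letters)
  have "word_eval \<phi> ([] @ u) = word_eval \<phi> ([] @ v)"
  proof (rule eval_eq_by_blocks)
    show "filter (\<lambda>z. z \<in> ?L) u = filter (\<lambda>z. z \<in> ?L) v"
      using assms(1,2) L_v by (intro T1_sat_filter_linear) auto
    show "\<forall>t\<in>?L. count_list u t \<le> 1"
      by (simp add: linear_letters_def)
    show "\<forall>t\<in>?L. count_list v t \<le> 1"
      unfolding L_v by (simp add: linear_letters_def)
    show "mset (leading_run ?L u) = mset (leading_run ?L v)"
      using assms(2,3) by (rule T1_sat_leading_run_mset)
    show "\<forall>t\<in>?L. mset (run_after ?L t u) = mset (run_after ?L t v)"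
      using T1_sat_run_after_mset[OF assms(2) _ _ _ assms(3)] L_v by blast
    show "\<forall>z\<in>set u - ?L. 2 \<le> count_list ([] @ u) z"
    proof
      fix z
      assume "z \<in> set u - ?L"
      then have "count_list u z \<noteq> 0" "count_list u z \<noteq> 1"
        by (auto simp: linear_letters_def count_list_0_iff)
      then show "2 \<le> count_list ([] @ u) z"
        by simp
    qed
  qed
  then show ?thesis
    by simp
qed

lemma T1_sat_eval_eq:
  fixes \<phi> :: "nat \<Rightarrow> 'a"
  assumes "2 \<le> m" "T1_sat m u v"
  shows "word_eval \<phi> u = word_eval \<phi> v"
  using assms(2)
proof (induction "length u" arbitrary: u v rule: less_induct)
  case less
  let ?L = "linear_letters u"
  show ?case
  proof (cases "\<exists>y. y \<notin> ?L \<and> sublist (replicate m y) (filter (\<lambda>z. z = y \<or> z \<in> ?L) u)")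
    case True
    then obtain y where y: "y \<notin> ?L" "sublist (replicate m y) (filter (\<lambda>z. z = y \<or> z \<in> ?L) u)"
      by blast
    have L_v: "?L = linear_letters v"
      using assms(1) less.prems by (rule T1_sat_linear_letters)
    have "sublist (replicate m y) (filter (\<lambda>z. z = y \<or> z \<in> ?L) v)"
      using T1_sat_sublist[OF T1_sat_filter[OF less.prems]] y(2) by simp
    then have "word_eval \<phi> v = \<phi> y ^ m * word_eval \<phi> (filter (\<lambda>z. z \<noteq> y) v)"
      using y(1) L_v by (intro eval_power_factor) simp_all
    moreover have "word_eval \<phi> u = \<phi> y ^ m * word_eval \<phi> (filter (\<lambda>z. z \<noteq> y) u)"
      using y by (rule eval_power_factor[rotated])
    moreover have "y \<in> set u"
      using y(2) assms(1) set_mono_sublist[OF y(2)] by (cases m) auto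
    then have "length (filter (\<lambda>z. z \<noteq> y) u) < length u"
      by (simp add: length_filter_less)
    then have "word_eval \<phi> (filter (\<lambda>z. z \<noteq> y) u) = word_eval \<phi> (filter (\<lambda>z. z \<noteq> y) v)"
      using less.hyps T1_sat_filter[OF less.prems] by blast
    ultimately show ?thesis
      by simp
  next
    case False
    then show ?thesis
      using eval_eq_if_no_power_factor[OF assms(1) less.prems] by blast
  qed
qed

end

theorem proposition5p3:
  fixes m :: nat and u v :: "nat list"
  assumes "2 \<le> m"
    and "in_E m TYPE('a::monoid_mult)"
    and "T1_sat m u v"
  shows "monoid_sat TYPE('a) u v"
proof -
  interpret E_monoid m "TYPE('a)"
    using assms(2) by unfold_locales
  show ?thesis
    unfolding monoid_sat_def using T1_sat_eval_eq[OF assms(1,3)] by blast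
qed

end
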